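(* Let $F$ be an $F_\sigma$ subset of $[0,1]$ with $0\in F$. Then there exist non-empty, convex and closed sets $A_1,A_2,A_3\subset\mathbb R^3$ such that: (i) if $\alpha\in F$ and $\beta\in[0,1]$ then $P_{A_3}^\alpha P_{A_2}^\alpha P_{A_1}^\beta$ has a fixed point; (ii) if $\alpha\in[0,1]\setminus F$ and $\beta\in(0,1]$ then $P_{A_3}^\alpha P_{A_2}^\alpha P_{A_1}^\beta$ has no fixed point.
   Context: For a non-empty, convex, closed subset $A\subset\mathbb R^3$, $P_A$ denotes the Euclidean nearest-point projection onto $A$, and for $\alpha\in[0,1]$, $P_A^\alpha(x)=\alpha P_A(x)+(1-\alpha)x$ (the $\alpha$-relaxed projection). Compositions are written as products. *)

theory Defs
  imports "HOL-Analysis.Analysis"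
begin

definition relproj :: "real \<Rightarrow> (real^3) set \<Rightarrow> real^3 \<Rightarrow> real^3" where
  "relproj \<alpha> A x = \<alpha> *\<^sub>R closest_point A x + (1 - \<alpha>) *\<^sub>R x"

end

theory Submission
  imports Defs
begin

text \<open>
  Write hor x = (x_1, x_2) for the horizontal part of a point of R^3.  A2 and A3 are the
  vertical lines over (2,2) and (0,2); in the horizontal plane the composition of their
  alpha-relaxed projections is the contraction u \<mapsto> m u + (1 - m) q, where m = (1 - alpha)^2 and
  q = target alpha = (2(1 - alpha)/(2 - alpha), 2) has norm at least 2.  Its direction
  phi alpha = q/|q| is a continuous injective curve on the unit circle, and it is the nearest
  point of the closed unit disk to q.

  Write F as a union of closed sets C_n and let the slice L_n be the disk of radius 1 - 1/(n+2)
  together with phi(C_n).  A1 is the tower over the slices: the intersection of all closed upper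
  half-spaces containing every point (y, n) with y \<in> L_n.  It is closed and convex, lies over the
  closed unit disk, contains a point above every point of the open unit disk, and each of its
  points over the unit circle lies over some L_n, hence over phi(C_n).

  If x is a fixed point of the cycle and p = P_A1 x, then horizontally x - p = k (q - p) with
  k \<ge> 0, and p_3 = x_3 when beta > 0.  For alpha \<in> C_n, putting p at (phi alpha, n) produces a
  fixed point (part i).  Conversely (part ii), testing the variational inequality of p against
  the points of A1 over the open disk shows that hor p is the nearest point of the unit disk to
  q, i.e. hor p = phi alpha; hence phi alpha \<in> phi(C_n), so alpha \<in> F.
\<close>

lemma closest_point_eqI:
  fixes S :: "'a::{real_inner,heine_borel} set"
  assumes "convex S" "closed S" "p \<in> S" "\<And>y. y \<in> S \<Longrightarrow> inner (x - p) (y - p) \<le> 0"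
  shows "closest_point S x = p"
proof -
  have "dist x p \<le> dist x y" if "y \<in> S" for y
  proof -
    have "inner (x - y) (x - y) = inner (x - p) (x - p) - 2 * inner (x - p) (y - p) + inner (y - p) (y - p)"
      by (simp add: inner_commute algebra_simps)
    hence "inner (x - p) (x - p) \<le> inner (x - y) (x - y)"
      using assms(4)[OF that] inner_ge_zero[of "y - p"] by linarith
    thus ?thesis by (simp add: dist_norm norm_le)
  qed
  thus ?thesis using closest_point_unique[OF assms(1-3)] by metis
qed

lemma closest_point_cball_radial:
  fixes z :: "'a::{real_inner,heine_borel}"
  assumes "norm z = 1" and "Q \<ge> 1"
  shows "closest_point (cball 0 1) (Q *\<^sub>R z) = z"
proof (rule closest_point_eqI[OF convex_cball closed_cball])
  show "z \<in> cball 0 1" using assms(1) by simp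
  fix y :: 'a assume "y \<in> cball 0 1"
  hence "inner z y \<le> 1" using norm_cauchy_schwarz[of z y] assms(1) by simp
  moreover have "inner (Q *\<^sub>R z - z) (y - z) = (Q - 1) * (inner z y - 1)"
    using assms(1) by (simp add: algebra_simps inner_commute power2_norm_eq_inner[symmetric])
  ultimately show "inner (Q *\<^sub>R z - z) (y - z) \<le> 0"
    using assms(2) by (simp add: mult_nonneg_nonpos)
qed

lemma sphere_gap:
  fixes L :: "'a::real_inner set"
  assumes "closed L" "L \<subseteq> cball 0 1" "norm h = 1" "h \<notin> L"
  shows "\<exists>d>0. \<forall>y\<in>L. inner h y \<le> 1 - d"
proof (cases "L = {}")
  case False
  have "0 < infdist h L" using infdist_pos_not_in_closed[OF assms(1) False assms(4)] .
  moreover have "inner h y \<le> 1 - (infdist h L)\<^sup>2 / 2" if y: "y \<in> L" for y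
  proof -
    have "(infdist h L)\<^sup>2 \<le> (norm (h - y))\<^sup>2"
      using infdist_le[OF y, of h] by (intro power_mono) (simp_all add: dist_norm infdist_nonneg)
    also have "\<dots> = (norm h)\<^sup>2 - 2 * inner h y + (norm y)\<^sup>2"
      by (simp add: power2_norm_eq_inner algebra_simps inner_commute)
    also have "\<dots> \<le> 2 - 2 * inner h y"
      using assms(2,3) y by (auto simp: power_le_one)
    finally show ?thesis by simp
  qed
  ultimately show ?thesis by (intro exI[of _ "(infdist h L)\<^sup>2 / 2"]) auto
qed (auto intro: exI[of _ 1])

lemma relaxed_fixed_iff:
  fixes x p q :: "'a::real_vector"
  shows "x = m *\<^sub>R (b *\<^sub>R p + (1 - b) *\<^sub>R x) + (1 - m) *\<^sub>R q
     \<longleftrightarrow> (1 - m * (1 - b)) *\<^sub>R (x - p) = (1 - m) *\<^sub>R (q - p)"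
  by (auto simp: algebra_simps)

definition hor :: "real^3 \<Rightarrow> real \<times> real" where "hor x = (x$1, x$2)"
definition lift :: "real \<times> real \<Rightarrow> real \<Rightarrow> real^3" where "lift w t = vector [fst w, snd w, t]"

lemma hor_lift [simp]: "hor (lift w t) = w" and height_lift [simp]: "lift w t $ 3 = t"
  by (simp_all add: hor_def lift_def)

lemma hor_add [simp]: "hor (x + y) = hor x + hor y"
  and hor_diff [simp]: "hor (x - y) = hor x - hor y"
  and hor_scaleR [simp]: "hor (c *\<^sub>R x) = c *\<^sub>R hor x"
  by (simp_all add: hor_def)

lemma inner_hor: "inner x y = inner (hor x) (hor y) + x$3 * y$3"
  by (simp add: inner_vec_def sum_3 hor_def)

lemma vec3_eq_iff: "x = y \<longleftrightarrow> hor x = hor y \<and> x$3 = y$3"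
  by (auto simp: hor_def vec_eq_iff forall_3)

definition vline :: "real \<times> real \<Rightarrow> (real^3) set" where "vline w = {x. hor x = w}"

lemma vline_closed: "closed (vline w)"
  unfolding vline_def hor_def by (intro closed_Collect_eq continuous_intros)

lemma vline_convex: "convex (vline w)"
  unfolding vline_def convex_def by (auto simp flip: scaleR_add_left)

lemma vline_nonempty: "vline w \<noteq> {}"
  using hor_lift[of w 0] unfolding vline_def by blast

lemma closest_point_vline: "closest_point (vline w) v = lift w (v$3)"
  by (rule closest_point_eqI[OF vline_convex vline_closed]) (simp_all add: vline_def inner_hor)

lemma relproj_vline: "relproj a (vline w) u = lift (a *\<^sub>R w + (1 - a) *\<^sub>R hor u) (u$3)"
  by (simp add: vec3_eq_iff relproj_def closest_point_vline algebra_simps)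

text \<open>The centre of the horizontal contraction performed by the two lines.\<close>

definition target :: "real \<Rightarrow> real \<times> real" where "target a = (2 * (1 - a) / (2 - a), 2)"

lemma relproj_two_lines:
  assumes "a \<noteq> 2"
  shows "relproj a (vline (0,2)) (relproj a (vline (2,2)) u)
     = lift ((1 - a)\<^sup>2 *\<^sub>R hor u + (1 - (1 - a)\<^sup>2) *\<^sub>R target a) (u$3)"
proof -
  have t: "(1 - (1 - a)\<^sup>2) *\<^sub>R target a = (2 * a * (1 - a), 2 * a * (2 - a))"
    using assms by (simp add: target_def field_simps power2_eq_square)
  obtain u1 u2 where "hor u = (u1, u2)" by fastforce
  thus ?thesis by (simp add: relproj_vline t) (simp add: algebra_simps power2_eq_square)
qed

lemma norm_target: "norm (target a) \<ge> 2"
  unfolding target_def norm_Pair by (rule real_le_rsqrt) simp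

lemma target_nonzero [simp]: "target a \<noteq> 0"
  by (simp add: target_def prod_eq_iff)

definition phi :: "real \<Rightarrow> real \<times> real" where "phi a = target a /\<^sub>R norm (target a)"

lemma norm_phi [simp]: "norm (phi a) = 1"
  by (simp add: phi_def)

lemma target_eq: "target a = norm (target a) *\<^sub>R phi a"
  by (simp add: phi_def)

lemma closest_point_cball_target: "closest_point (cball 0 1) (target a) = phi a"
  using closest_point_cball_radial[OF norm_phi, of "norm (target a)" a] norm_target[of a]
  by (simp flip: target_eq)

lemma phi_inj: "inj_on phi {0..1}"
proof (rule inj_onI)
  fix a b :: real assume ab: "a \<in> {0..1}" "b \<in> {0..1}" and phi: "phi a = phi b"
  have "2 / norm (target a) = 2 / norm (target b)"
    using arg_cong[OF phi, of snd] by (simp add: phi_def target_def)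
  hence "norm (target a) = norm (target b)" by simp
  hence "target a = target b" by (metis phi target_eq)
  hence "2 * (1 - a) / (2 - a) = 2 * (1 - b) / (2 - b)" by (simp add: target_def)
  thus "a = b" using ab by (simp add: field_simps)
qed

lemma phi_continuous: "continuous_on {0..1} phi"
  unfolding phi_def target_def
  by (intro continuous_intros) (auto simp: prod_eq_iff)

definition cycle :: "real \<Rightarrow> real \<Rightarrow> (real^3) set \<Rightarrow> real^3 \<Rightarrow> real^3" where
  "cycle a b A x = relproj a (vline (0,2)) (relproj a (vline (2,2)) (relproj b A x))"

lemma cycle_fixed_iff:
  fixes A :: "(real^3) set" and x :: "real^3"
  assumes "a \<noteq> 2"
  defines "p \<equiv> closest_point A x" and "m \<equiv> (1 - a)\<^sup>2"
  shows "cycle a b A x = x \<longleftrightarrow>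
     (1 - m * (1 - b)) *\<^sub>R (hor x - hor p) = (1 - m) *\<^sub>R (target a - hor p) \<and> b * (p$3 - x$3) = 0"
proof -
  have "cycle a b A x = lift (m *\<^sub>R (b *\<^sub>R hor p + (1 - b) *\<^sub>R hor x) + (1 - m) *\<^sub>R target a)
                          (b * p$3 + (1 - b) * x$3)"
    unfolding cycle_def relproj_two_lines[OF assms(1)] by (simp add: relproj_def p_def m_def)
  hence "cycle a b A x = x \<longleftrightarrow>
     hor x = m *\<^sub>R (b *\<^sub>R hor p + (1 - b) *\<^sub>R hor x) + (1 - m) *\<^sub>R target a \<and> x$3 = b * p$3 + (1 - b) * x$3"
    by (auto simp: vec3_eq_iff)
  thus ?thesis by (auto simp: relaxed_fixed_iff algebra_simps)
qed

lemma cycle_fixed_point_exists: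
  fixes A :: "(real^3) set"
  assumes "convex A" "closed A" and A_disk: "\<And>y. y \<in> A \<Longrightarrow> norm (hor y) \<le> 1"
    and top: "lift (phi a) t \<in> A" and a: "0 \<le> a" "a \<le> 1" and b: "0 \<le> b" "b \<le> 1"
  shows "\<exists>x. cycle a b A x = x"
proof -
  define m where "m = (1 - a)\<^sup>2"
  define D where "D = 1 - m * (1 - b)"
  define k where "k = (1 - m) / D"
  have "0 \<le> m" "m \<le> 1" unfolding m_def using a by (auto simp: power_le_one)
  hence "0 \<le> 1 - m" "1 - m \<le> D" using b unfolding D_def by (auto simp: mult_left_le)
  hence k: "0 \<le> k" and Dk: "D * k = 1 - m" unfolding k_def by auto
  define p where "p = lift (phi a) t"
  define x where "x = lift (phi a + k *\<^sub>R (target a - phi a)) t"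
  have "closest_point A x = p"
  proof (rule closest_point_eqI[OF assms(1,2)])
    show "p \<in> A" using top by (simp add: p_def)
    fix y assume "y \<in> A"
    hence "inner (target a - phi a) (hor y - phi a) \<le> 0"
      using closest_point_dot[OF convex_cball closed_cball, of "hor y" 0 1 "target a"] A_disk
      by (simp add: closest_point_cball_target)
    thus "inner (x - p) (y - p) \<le> 0"
      using k by (simp add: x_def p_def inner_hor mult_nonneg_nonpos)
  qed
  hence "cycle a b A x = x"
    using a Dk by (simp add: cycle_fixed_iff x_def p_def flip: m_def D_def)
  thus ?thesis ..
qed

lemma cycle_fixed_point_at_phi:
  fixes A :: "(real^3) set"
  assumes "convex A" "closed A" "A \<noteq> {}" and A_disk: "\<And>y. y \<in> A \<Longrightarrow> norm (hor y) \<le> 1"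
    and A_ball: "\<And>w. w \<in> ball 0 1 \<Longrightarrow> \<exists>t. lift w t \<in> A"
    and a: "0 < a" "a \<le> 1" and b: "0 < b" and fixed: "cycle a b A x = x"
  shows "hor (closest_point A x) = phi a"
proof -
  define p where "p = closest_point A x"
  define m where "m = (1 - a)\<^sup>2"
  define D where "D = 1 - m * (1 - b)"
  have m0: "0 \<le> m" "m < 1" unfolding m_def using a by (auto simp: power_less_one_iff abs_less_iff)
  moreover have "m * (1 - b) \<le> m" using m0 b by (intro mult_left_le) auto
  ultimately have m: "0 < 1 - m" and D: "0 < D" unfolding D_def by auto
  have eq: "D *\<^sub>R (hor x - hor p) = (1 - m) *\<^sub>R (target a - hor p)" and height: "p$3 = x$3"
    using fixed cycle_fixed_iff[where a=a and A=A and x=x and b=b] a b by (auto simp: p_def m_def D_def)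
  have ball: "inner (target a - hor p) (w - hor p) \<le> 0" if w: "w \<in> ball 0 1" for w
  proof -
    obtain t where "lift w t \<in> A" using A_ball[OF w] by blast
    hence "inner (x - p) (lift w t - p) \<le> 0"
      unfolding p_def by (rule closest_point_dot[OF assms(1,2)])
    hence "D * inner (hor x - hor p) (w - hor p) \<le> 0"
      using height D by (simp add: inner_hor mult_nonneg_nonpos)
    hence "(1 - m) * inner (target a - hor p) (w - hor p) \<le> 0"
      using arg_cong[OF eq, of "\<lambda>v. inner v (w - hor p)"] by simp
    thus ?thesis using m by (simp add: mult_le_0_iff)
  qed
  have "closure (ball 0 1) \<subseteq> {w. inner (target a - hor p) (w - hor p) \<le> 0}"
    using ball by (intro closure_minimal closed_Collect_le continuous_intros) auto
  moreover have "hor p \<in> cball 0 1"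
    using A_disk closest_point_in_set[OF assms(2,3)] by (simp add: p_def)
  ultimately have "closest_point (cball 0 1) (target a) = hor p"
    by (intro closest_point_eqI[OF convex_cball closed_cball]) auto
  thus ?thesis by (simp add: closest_point_cball_target p_def)
qed

definition tower :: "(nat \<Rightarrow> (real \<times> real) set) \<Rightarrow> (real^3) set" where
  "tower L = {x. \<forall>c r. (\<forall>n. \<forall>y\<in>L n. inner c y + r \<le> real n) \<longrightarrow> inner c (hor x) + r \<le> x$3}"

lemma tower_Inter:
  "tower L = (\<Inter>(c, r) \<in> {(c, r). \<forall>n. \<forall>y\<in>L n. inner c y + r \<le> real n}.
                 {x. inner (lift c (-1)) x \<le> - r})"
  by (auto simp: tower_def inner_hor algebra_simps)

lemma tower_closed: "closed (tower L)"
  unfolding tower_Inter by (intro closed_INT ballI) (auto intro: closed_halfspace_le)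

lemma tower_convex: "convex (tower L)"
  unfolding tower_Inter by (intro convex_INT ballI) (auto intro: convex_halfspace_le)

lemma lift_in_tower: "y \<in> L n \<Longrightarrow> lift y (real n) \<in> tower L"
  unfolding tower_def by auto

text \<open>If all slices lie in the unit disk, the tower lies over the unit disk: a point over the
  outside is cut off by a steep half-space through the unit circle.\<close>

lemma tower_disk:
  assumes L: "\<And>n. L n \<subseteq> cball 0 1" and x: "x \<in> tower L"
  shows "norm (hor x) \<le> 1"
proof (rule ccontr)
  define h where "h = hor x"
  assume "\<not> norm (hor x) \<le> 1"
  hence h: "1 < norm h" by (simp add: h_def)
  define A where "A = (\<bar>x$3\<bar> + 1) / (norm h * (norm h - 1))"
  have A: "0 < A" using h unfolding A_def by (intro divide_pos_pos mult_pos_pos) auto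
  have "inner (A *\<^sub>R h) y + - A * norm h \<le> real n" if y: "y \<in> L n" for n y
  proof -
    have "inner h y \<le> norm h * norm y" by (rule norm_cauchy_schwarz)
    also have "\<dots> \<le> norm h" using subsetD[OF L y] by (simp add: mult_left_le)
    finally have "inner h y \<le> norm h" .
    hence "A * (inner h y - norm h) \<le> 0" using A by (simp add: mult_nonneg_nonpos)
    thus ?thesis by (simp add: algebra_simps)
  qed
  hence "inner (A *\<^sub>R h) h + - A * norm h \<le> x$3" using x unfolding tower_def h_def by blast
  moreover have "inner (A *\<^sub>R h) h + - A * norm h = A * (norm h * (norm h - 1))"
    by (simp add: power2_norm_eq_inner[symmetric] power2_eq_square algebra_simps)
  moreover have "A * (norm h * (norm h - 1)) = \<bar>x$3\<bar> + 1"
    using h by (auto simp: A_def)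
  ultimately show False by linarith
qed

text \<open>A point of the tower over the unit circle lies over one of the closed slices; otherwise the
  uniform gaps of the finitely many low slices give a half-space excluding it.\<close>

lemma tower_sphere:
  assumes L: "\<And>n. closed (L n)" "\<And>n. L n \<subseteq> cball 0 1"
    and x: "x \<in> tower L" and h: "norm (hor x) = 1"
  shows "\<exists>n. hor x \<in> L n"
proof (rule ccontr)
  assume "\<nexists>n. hor x \<in> L n"
  hence "\<forall>n. \<exists>d>0. \<forall>y\<in>L n. inner (hor x) y \<le> 1 - d"
    using sphere_gap[OF L(1,2) h] by blast
  then obtain d where d: "\<And>n. 0 < d n" "\<And>n y. y \<in> L n \<Longrightarrow> inner (hor x) y \<le> 1 - d n"
    by metis
  define c where "c = x$3 + 1"
  define N where "N = nat \<lceil>c\<rceil>"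
  define A where "A = (\<Sum>n\<le>N. (\<bar>c\<bar> + 1) / d n)"
  have terms: "0 \<le> (\<bar>c\<bar> + 1) / d n" for n using d(1)[of n] by simp
  hence A: "0 \<le> A" unfolding A_def by (intro sum_nonneg) auto
  have "inner (A *\<^sub>R hor x) y + (c - A) \<le> real n" if y: "y \<in> L n" for n y
  proof (cases "n \<le> N")
    case True
    have "(\<bar>c\<bar> + 1) / d n \<le> A" unfolding A_def using True terms by (intro member_le_sum) auto
    hence "\<bar>c\<bar> + 1 \<le> A * d n" using d(1)[of n] by (simp add: divide_le_eq)
    moreover have "A * (inner (hor x) y - 1) \<le> A * (- d n)"
      using d(2)[OF y] A by (intro mult_left_mono) auto
    ultimately show ?thesis by (simp add: algebra_simps)
  next
    case False
    have "A * (inner (hor x) y - 1) \<le> 0"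
      using d(2)[OF y] d(1)[of n] A by (intro mult_nonneg_nonpos) auto
    moreover have "c \<le> real n" using False unfolding N_def by linarith
    ultimately show ?thesis by (simp add: algebra_simps)
  qed
  hence "inner (A *\<^sub>R hor x) (hor x) + (c - A) \<le> x$3" using x unfolding tower_def by blast
  moreover have "inner (hor x) (hor x) = 1"
    using h power2_norm_eq_inner[of "hor x"] by simp
  ultimately show False by (simp add: c_def)
qed

definition slices :: "(nat \<Rightarrow> real set) \<Rightarrow> nat \<Rightarrow> (real \<times> real) set" where
  "slices C n = cball 0 (1 - 1 / (real n + 2)) \<union> phi ` C n"

lemma slices_subset_cball: "slices C n \<subseteq> cball 0 1"
proof -
  have "cball (0::real \<times> real) (1 - 1 / (real n + 2)) \<subseteq> cball 0 1" by (intro subset_cball) simp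
  thus ?thesis by (auto simp: slices_def)
qed

lemma slices_closed:
  assumes "closed (C n)" "C n \<subseteq> {0..1}"
  shows "closed (slices C n)"
proof -
  have "compact (C n)" using assms compact_Icc[of 0 1] by (metis compact_Int_closed inf.absorb_iff2)
  hence "compact (phi ` C n)"
    using continuous_on_subset[OF phi_continuous assms(2)] by (rule compact_continuous_image[rotated])
  thus ?thesis unfolding slices_def by (intro closed_Un compact_imp_closed) auto
qed

lemma ball_subset_slices:
  assumes "w \<in> ball 0 1"
  shows "\<exists>n. w \<in> slices C n"
proof -
  have "0 < 1 - norm w" using assms by simp
  then obtain n where n: "n > 0" "inverse (real n) < 1 - norm w"
    using ex_inverse_of_nat_less by blast
  have "1 / (real n + 2) \<le> inverse (real n)" using n(1) by (simp add: field_simps)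
  hence "w \<in> cball 0 (1 - 1 / (real n + 2))" using n(2) by simp
  thus ?thesis unfolding slices_def by blast
qed

lemma slices_sphere:
  assumes "y \<in> slices C n" "norm y = 1"
  shows "y \<in> phi ` C n"
proof -
  have "1 - 1 / (real n + 2) < 1" by simp
  thus ?thesis using assms unfolding slices_def by auto
qed

lemma tower_slices:
  shows "convex (tower (slices C))" "closed (tower (slices C))"
    and "\<And>y. y \<in> tower (slices C) \<Longrightarrow> norm (hor y) \<le> 1"
    and "\<And>w. w \<in> ball 0 1 \<Longrightarrow> \<exists>t. lift w t \<in> tower (slices C)"
    and "tower (slices C) \<noteq> {}"
proof -
  show "convex (tower (slices C))" "closed (tower (slices C))"
    by (simp_all add: tower_convex tower_closed)
  show "\<And>y. y \<in> tower (slices C) \<Longrightarrow> norm (hor y) \<le> 1"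
    by (rule tower_disk[OF slices_subset_cball])
  show ball: "\<And>w. w \<in> ball 0 1 \<Longrightarrow> \<exists>t. lift w t \<in> tower (slices C)"
    using ball_subset_slices lift_in_tower by blast
  show "tower (slices C) \<noteq> {}" using ball[of 0] by auto
qed

lemma tower_slices_phi:
  assumes "\<And>n. closed (C n)" "\<And>n. C n \<subseteq> {0..1}" "a \<in> {0..1}"
    and "x \<in> tower (slices C)" "hor x = phi a"
  shows "\<exists>n. a \<in> C n"
proof -
  obtain n where "phi a \<in> slices C n"
    using tower_sphere[OF slices_closed[OF assms(1,2)] slices_subset_cball assms(4)] assms(5) by auto
  hence "phi a \<in> phi ` C n" using slices_sphere by simp
  then obtain a' where "a' \<in> C n" "phi a = phi a'" by blast
  moreover have "a' \<in> {0..1}" using \<open>a' \<in> C n\<close> assms(2) by blast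
  ultimately show ?thesis using inj_onD[OF phi_inj] assms(3) by metis
qed

theorem lemma4:
  fixes F :: "real set"
  assumes "fsigma_in euclideanreal F" and "F \<subseteq> {0..1}" and "0 \<in> F"
  shows "\<exists>A1 A2 A3 :: (real^3) set.
     A1 \<noteq> {} \<and> convex A1 \<and> closed A1 \<and>
     A2 \<noteq> {} \<and> convex A2 \<and> closed A2 \<and>
     A3 \<noteq> {} \<and> convex A3 \<and> closed A3 \<and>
     (\<forall>\<alpha> \<in> F. \<forall>\<beta> \<in> {0..1}. \<exists>x.
        relproj \<alpha> A3 (relproj \<alpha> A2 (relproj \<beta> A1 x)) = x) \<and>
     (\<forall>\<alpha> \<in> {0..1} - F. \<forall>\<beta> \<in> {0<..1}. \<forall>x.
        relproj \<alpha> A3 (relproj \<alpha> A2 (relproj \<beta> A1 x)) \<noteq> x)"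
proof -
  from assms(1) obtain C :: "nat \<Rightarrow> real set" where C: "\<forall>n. closedin euclideanreal (C n)"
    and F: "\<Union>(range C) = F"
    unfolding fsigma_in_ascending by blast
  have Cc: "closed (C n)" for n using C closed_closedin by blast
  have C01: "C n \<subseteq> {0..1}" for n using F assms(2) by blast
  define A1 where "A1 = tower (slices C)"
  note A1 = tower_slices[where C=C, folded A1_def]
  have fixed: "\<exists>x. cycle a b A1 x = x" if a: "a \<in> F" and b: "b \<in> {0..1}" for a b
  proof -
    obtain n where "a \<in> C n" using F a by blast
    hence "lift (phi a) (real n) \<in> A1" unfolding A1_def slices_def by (intro lift_in_tower) blast
    thus ?thesis using cycle_fixed_point_exists[OF A1(1-3)] a b assms(2) by auto
  qed
  have not_fixed: "cycle a b A1 x \<noteq> x" if a: "a \<in> {0..1} - F" and b: "b \<in> {0<..1}" for a b x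
  proof
    assume "cycle a b A1 x = x"
    moreover have "0 < a" using a assms(3) by (cases "a = 0") auto
    ultimately have "hor (closest_point A1 x) = phi a"
      using cycle_fixed_point_at_phi[OF A1(1,2,5,3,4)] a b by auto
    then obtain n where "a \<in> C n"
      using tower_slices_phi[of C a "closest_point A1 x"] Cc C01 a closest_point_in_set[OF A1(2,5)]
      unfolding A1_def by auto
    thus False using F a by blast
  qed
  show ?thesis
    using A1 fixed not_fixed vline_closed vline_convex vline_nonempty unfolding cycle_def
    by (intro exI[of _ A1] exI[of _ "vline (2,2)"] exI[of _ "vline (0,2)"]) auto
qed

end
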